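(* Let $l\ge2$ be odd and let $a,b\in\{1,\dots,l-1\}$ be such that $X=X(\mathbb{Z}_{2l},\{\pm a,\pm b\})$ is a connected $4$-regular circulant graph with $a+b\ne l$. Then $X$ does not admit perfect state transfer between (distinct) vertex type states.
   Context: $X(\mathbb{Z}_n,S)$ (with $S\subseteq\mathbb{Z}_n\setminus\{0\}$, $S=-S$) has vertex set $\mathbb{Z}_n$ and edges $\{x,y\}$ with $y-x\in S$. For a graph with symmetric arc set $\mathcal{A}$ ($t((x,y))=y$, $(x,y)^{-1}=(y,x)$): boundary matrix $d_{x,a}=\frac{1}{\sqrt{\deg x}}\delta_{x,t(a)}$, shift matrix $R_{a,b}=\delta_{a,b^{-1}}$, $U=R(2d^*d-I_{\mathcal{A}})$. Perfect state transfer between vertex type states means $U^\tau d^*e_x=\gamma d^*e_y$ for some distinct vertices $x,y$, some $\tau\in\mathbb{Z}_{\ge1}$ and some $|\gamma|=1$ ($e_x$ the standard unit vector). *)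

theory Defs
  imports Complex_Main
begin

text \<open>Matrices indexed by finite sets are represented as functions of two indices.\<close>

definition arcs :: "'v set \<Rightarrow> ('v \<Rightarrow> 'v \<Rightarrow> bool) \<Rightarrow> ('v \<times> 'v) set" where
  "arcs V E = {(x, y). x \<in> V \<and> y \<in> V \<and> E x y}"

definition gdeg :: "'v set \<Rightarrow> ('v \<Rightarrow> 'v \<Rightarrow> bool) \<Rightarrow> 'v \<Rightarrow> nat" where
  "gdeg V E x = card {y \<in> V. E x y}"

definition term_arc :: "'v \<times> 'v \<Rightarrow> 'v" where
  "term_arc a = snd a"

definition inv_arc :: "'v \<times> 'v \<Rightarrow> 'v \<times> 'v" where
  "inv_arc a = (snd a, fst a)"

definition bdry :: "'v set \<Rightarrow> ('v \<Rightarrow> 'v \<Rightarrow> bool) \<Rightarrow> 'v \<Rightarrow> 'v \<times> 'v \<Rightarrow> complex" where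
  "bdry V E x a = (if x = term_arc a then complex_of_real (1 / sqrt (real (gdeg V E x))) else 0)"

definition shift :: "'v \<times> 'v \<Rightarrow> 'v \<times> 'v \<Rightarrow> complex" where
  "shift a b = (if a = inv_arc b then 1 else 0)"

definition dstar_d :: "'v set \<Rightarrow> ('v \<Rightarrow> 'v \<Rightarrow> bool) \<Rightarrow> 'v \<times> 'v \<Rightarrow> 'v \<times> 'v \<Rightarrow> complex" where
  "dstar_d V E a b = (\<Sum>x\<in>V. cnj (bdry V E x a) * bdry V E x b)"

definition walkU :: "'v set \<Rightarrow> ('v \<Rightarrow> 'v \<Rightarrow> bool) \<Rightarrow> 'v \<times> 'v \<Rightarrow> 'v \<times> 'v \<Rightarrow> complex" where
  "walkU V E a b = (\<Sum>c\<in>arcs V E. shift a c *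
       (2 * dstar_d V E c b - (if c = b then 1 else 0)))"

definition arc_mult :: "'v set \<Rightarrow> ('v \<Rightarrow> 'v \<Rightarrow> bool) \<Rightarrow> (('v \<times> 'v) \<Rightarrow> complex) \<Rightarrow> (('v \<times> 'v) \<Rightarrow> complex)" where
  "arc_mult V E \<psi> = (\<lambda>a. \<Sum>b\<in>arcs V E. walkU V E a b * \<psi> b)"

definition walkU_pow :: "'v set \<Rightarrow> ('v \<Rightarrow> 'v \<Rightarrow> bool) \<Rightarrow> nat \<Rightarrow> (('v \<times> 'v) \<Rightarrow> complex) \<Rightarrow> (('v \<times> 'v) \<Rightarrow> complex)" where
  "walkU_pow V E \<tau> = (arc_mult V E ^^ \<tau>)"

definition vstate :: "'v set \<Rightarrow> ('v \<Rightarrow> 'v \<Rightarrow> bool) \<Rightarrow> 'v \<Rightarrow> ('v \<times> 'v) \<Rightarrow> complex" where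
  "vstate V E x = (\<lambda>a. cnj (bdry V E x a))"

definition vertex_PST :: "'v set \<Rightarrow> ('v \<Rightarrow> 'v \<Rightarrow> bool) \<Rightarrow> bool" where
  "vertex_PST V E \<longleftrightarrow> (\<exists>x\<in>V. \<exists>y\<in>V. \<exists>\<tau>::nat. \<exists>\<gamma>::complex.
      x \<noteq> y \<and> \<tau> \<ge> 1 \<and> cmod \<gamma> = 1 \<and>
      (\<forall>a\<in>arcs V E. walkU_pow V E \<tau> (vstate V E x) a = \<gamma> * vstate V E y a))"

definition gconnected :: "'v set \<Rightarrow> ('v \<Rightarrow> 'v \<Rightarrow> bool) \<Rightarrow> bool" where
  "gconnected V E \<longleftrightarrow> (\<forall>x\<in>V. \<forall>y\<in>V. (x, y) \<in> (arcs V E)\<^sup>*)"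

definition gregular :: "'v set \<Rightarrow> ('v \<Rightarrow> 'v \<Rightarrow> bool) \<Rightarrow> nat \<Rightarrow> bool" where
  "gregular V E k \<longleftrightarrow> (\<forall>x\<in>V. gdeg V E x = k)"

text \<open>Circulant graph X(Z_n, S): vertices 0..n-1 (representatives of Z_n),
x ~ y iff (y - x) mod n \<in> S, S given by residues in {0..n-1}.\<close>
definition circ_V :: "int \<Rightarrow> int set" where
  "circ_V n = {0..<n}"

definition circ_E :: "int \<Rightarrow> int set \<Rightarrow> int \<Rightarrow> int \<Rightarrow> bool" where
  "circ_E n S x y \<longleftrightarrow> (y - x) mod n \<in> S"

definition pm_set :: "int \<Rightarrow> int \<Rightarrow> int \<Rightarrow> int set" where
  "pm_set n a b = {a mod n, (- a) mod n, b mod n, (- b) mod n}"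

end

theory Submission
  imports Defs "HOL-Library.Z2" "HOL-Number_Theory.Residues"
begin

(* Let F_t(v) be the total amplitude of U^t d^* e_x on the arcs entering v. In a 4-regular graph
   F_(t+2) = A F_(t+1) / 2 - F_t with F_0 = 2 e_x and F_1 = A e_x / 2, so K_t = 2^t F_t is an
   integer vector and K_t = A^t e_x (mod 2) for t >= 1. Perfect state transfer at time tau gives
   F_tau = 2 gamma e_y with |gamma| = 1, so K_tau is even and A^tau e_x = 0 over GF(2).
   On the circulant, A is the sum of the shifts by +-a and +-b, and over GF(2) squaring A doubles
   the shifts. Hence for 2^j = 1 (mod l) and 2^j >= tau, the vector A^(2^j) e_x, which must vanish,
   has entry 1 at x + 2^j a: the other three shifts would need l to divide 2a, a + b or a - b. *)

definition nbhd :: "'v set \<Rightarrow> ('v \<Rightarrow> 'v \<Rightarrow> bool) \<Rightarrow> 'v \<Rightarrow> 'v set" where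
  "nbhd V E v = {u \<in> V. E v u}"

definition adj_sum :: "'v set \<Rightarrow> ('v \<Rightarrow> 'v \<Rightarrow> bool) \<Rightarrow> ('v \<Rightarrow> 'a::comm_monoid_add) \<Rightarrow> 'v \<Rightarrow> 'a"
  where "adj_sum V E h v = (\<Sum>u\<in>nbhd V E v. h u)"

(* inflow V E \<psi> is sqrt k times the boundary d \<psi> of the paper. *)
definition inflow :: "'v set \<Rightarrow> ('v \<Rightarrow> 'v \<Rightarrow> bool) \<Rightarrow> ('v \<times> 'v \<Rightarrow> complex) \<Rightarrow> 'v \<Rightarrow> complex"
  where "inflow V E \<psi> v = (\<Sum>u\<in>nbhd V E v. \<psi> (u, v))"

definition outflow :: "'v set \<Rightarrow> ('v \<Rightarrow> 'v \<Rightarrow> bool) \<Rightarrow> ('v \<times> 'v \<Rightarrow> complex) \<Rightarrow> 'v \<Rightarrow> complex"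
  where "outflow V E \<psi> v = (\<Sum>u\<in>nbhd V E v. \<psi> (v, u))"

lemma adj_sum_cong: "(\<And>u. u \<in> V \<Longrightarrow> h u = g u) \<Longrightarrow> adj_sum V E h v = adj_sum V E g v"
  unfolding adj_sum_def nbhd_def by (rule sum.cong) auto

locale regular_graph =
  fixes V :: "'v set" and E :: "'v \<Rightarrow> 'v \<Rightarrow> bool" and k :: nat
  assumes finite_V: "finite V"
    and sym: "E x y \<Longrightarrow> E y x"
    and degree: "x \<in> V \<Longrightarrow> gdeg V E x = k"
begin

lemma finite_nbhd: "finite (nbhd V E v)"
  using finite_V by (simp add: nbhd_def)

lemma card_nbhd: "v \<in> V \<Longrightarrow> card (nbhd V E v) = k"
  using degree by (simp add: gdeg_def nbhd_def)

lemma finite_arcs: "finite (arcs V E)"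
  by (rule finite_subset[of _ "V \<times> V"]) (auto simp: arcs_def finite_V)

lemma out_arc_iff: "(v, u) \<in> arcs V E \<longleftrightarrow> v \<in> V \<and> u \<in> nbhd V E v"
  by (auto simp: arcs_def nbhd_def)

lemma in_arc_iff: "(u, v) \<in> arcs V E \<longleftrightarrow> v \<in> V \<and> u \<in> nbhd V E v"
  by (auto simp: arcs_def nbhd_def intro: sym)

lemma inv_arc_in_arcs: "a \<in> arcs V E \<Longrightarrow> inv_arc a \<in> arcs V E"
  by (auto simp: arcs_def inv_arc_def intro: sym)

lemma bdry_eq: "x \<in> V \<Longrightarrow> bdry V E x a = (if x = snd a then of_real (1 / sqrt k) else 0)"
  using degree[of x] by (auto simp: bdry_def term_arc_def)

lemma dstar_d_eq: "c \<in> arcs V E \<Longrightarrow> dstar_d V E c b = (if snd c = snd b then 1 / of_nat k else 0)"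
proof -
  assume "c \<in> arcs V E"
  then have c: "snd c \<in> V" by (auto simp: arcs_def)
  have "dstar_d V E c b = (\<Sum>x\<in>V. if x = snd c then (if snd c = snd b then 1 / of_nat k else 0) else 0)"
    unfolding dstar_d_def by (rule sum.cong) (auto simp: bdry_eq simp flip: of_real_mult)
  then show ?thesis using c finite_V by simp
qed

lemma walkU_eq:
  assumes "a \<in> arcs V E"
  shows "walkU V E a b = (if fst a = snd b then 2 / of_nat k else 0) - (if b = inv_arc a then 1 else 0)"
proof -
  have "walkU V E a b = (\<Sum>c\<in>arcs V E.
      if c = inv_arc a then 2 * dstar_d V E (inv_arc a) b - (if inv_arc a = b then 1 else 0) else 0)"
    unfolding walkU_def by (rule sum.cong) (auto simp: shift_def inv_arc_def)
  also have "\<dots> = 2 * dstar_d V E (inv_arc a) b - (if inv_arc a = b then 1 else 0)"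
    using inv_arc_in_arcs[OF assms] finite_arcs by simp
  finally show ?thesis
    using dstar_d_eq[OF inv_arc_in_arcs[OF assms]] by (auto simp: inv_arc_def)
qed

lemma arc_mult_eq:
  assumes "(p, q) \<in> arcs V E"
  shows "arc_mult V E \<psi> (p, q) = 2 / of_nat k * inflow V E \<psi> p - \<psi> (q, p)"
proof -
  have p: "p \<in> V" using assms by (simp add: out_arc_iff)
  have "arc_mult V E \<psi> (p, q) = (\<Sum>b\<in>arcs V E. if snd b = p then 2 / of_nat k * \<psi> b else 0)
      - (\<Sum>b\<in>arcs V E. if b = (q, p) then \<psi> b else 0)"
    unfolding arc_mult_def sum_subtractf[symmetric]
    by (rule sum.cong) (auto simp: walkU_eq[OF assms] inv_arc_def left_diff_distrib)
  also have "(\<Sum>b\<in>arcs V E. if snd b = p then 2 / of_nat k * \<psi> b else 0)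
      = (\<Sum>u\<in>nbhd V E p. 2 / of_nat k * \<psi> (u, p))"
  proof -
    have "{b \<in> arcs V E. snd b = p} = (\<lambda>u. (u, p)) ` nbhd V E p"
      using p by (auto simp: in_arc_iff)
    then show ?thesis
      using finite_arcs by (simp add: sum.inter_filter[symmetric] sum.reindex inj_on_def)
  qed
  also have "(\<Sum>b\<in>arcs V E. if b = (q, p) then \<psi> b else 0) = \<psi> (q, p)"
    using inv_arc_in_arcs[OF assms] finite_arcs by (simp add: inv_arc_def)
  finally show ?thesis by (simp add: inflow_def sum_distrib_left)
qed

lemma inflow_arc_mult:
  "v \<in> V \<Longrightarrow> inflow V E (arc_mult V E \<psi>) v
     = 2 / of_nat k * adj_sum V E (inflow V E \<psi>) v - outflow V E \<psi> v"
  by (simp add: inflow_def outflow_def adj_sum_def arc_mult_eq in_arc_iff out_arc_iff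
      sum_subtractf sum_distrib_left)

lemma outflow_arc_mult: "v \<in> V \<Longrightarrow> outflow V E (arc_mult V E \<psi>) v = inflow V E \<psi> v"
proof -
  assume v: "v \<in> V"
  have "outflow V E (arc_mult V E \<psi>) v = of_nat k * (2 / of_nat k * inflow V E \<psi> v) - inflow V E \<psi> v"
    using v by (simp add: outflow_def inflow_def arc_mult_eq out_arc_iff sum_subtractf card_nbhd)
  also have "\<dots> = inflow V E \<psi> v"
    using v card_nbhd[OF v] by (cases "k = 0") (auto simp: inflow_def finite_nbhd)
  finally show ?thesis .
qed

lemma inflow_vstate:
  assumes "x \<in> V" "v \<in> V"
  shows "inflow V E (vstate V E x) v = (if v = x then of_real (sqrt k) else 0)"
proof -
  have "inflow V E (vstate V E x) v = (\<Sum>u\<in>nbhd V E v. if v = x then of_real (1 / sqrt k) else 0)"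
    unfolding inflow_def vstate_def by (rule sum.cong) (auto simp: bdry_eq[OF assms(1)])
  also have "\<dots> = (if v = x then of_real (real k * (1 / sqrt k)) else 0)"
    using card_nbhd[OF assms(2)] by simp
  finally show ?thesis by (simp add: real_div_sqrt)
qed

lemma outflow_vstate:
  "x \<in> V \<Longrightarrow> outflow V E (vstate V E x) v = (if x \<in> nbhd V E v then of_real (1 / sqrt k) else 0)"
  by (simp add: outflow_def vstate_def bdry_eq finite_nbhd if_distrib[of cnj] cong: if_cong)

end

locale four_regular_graph = regular_graph V E 4 for V :: "'v set" and E
begin

(* The recurrence is inflow_arc_mult and outflow_arc_mult for k = 4, scaled by 2^(t+2). *)
fun scaled_inflow :: "'v \<Rightarrow> nat \<Rightarrow> 'v \<Rightarrow> int" where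
  "scaled_inflow x 0 v = (if v = x then 2 else 0)"
| "scaled_inflow x (Suc 0) v = (if x \<in> nbhd V E v then 1 else 0)"
| "scaled_inflow x (Suc (Suc t)) v = adj_sum V E (scaled_inflow x (Suc t)) v - 4 * scaled_inflow x t v"

lemma inflow_funpow_vstate:
  assumes "x \<in> V" "v \<in> V"
  shows "inflow V E ((arc_mult V E ^^ t) (vstate V E x)) v = of_int (scaled_inflow x t v) / 2 ^ t"
  using assms
proof (induction x t v rule: scaled_inflow.induct)
  case (1 x v)
  then show ?case by (simp add: inflow_vstate)
next
  case (2 x v)
  have "adj_sum V E (inflow V E (vstate V E x)) v = adj_sum V E (\<lambda>u. if u = x then 2 else 0) v"
    using 2 by (intro adj_sum_cong) (simp add: inflow_vstate)
  also have "\<dots> = (if x \<in> nbhd V E v then 2 else 0)"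
    by (simp add: adj_sum_def finite_nbhd)
  finally show ?case using 2 by (simp add: inflow_arc_mult outflow_vstate)
next
  case (3 x t v)
  let ?\<psi> = "\<lambda>t. (arc_mult V E ^^ t) (vstate V E x)"
  have "adj_sum V E (inflow V E (?\<psi> (Suc t))) v
      = adj_sum V E (\<lambda>u. of_int (scaled_inflow x (Suc t) u) / 2 ^ Suc t) v"
    using 3 by (intro adj_sum_cong) simp
  also have "\<dots> = of_int (adj_sum V E (scaled_inflow x (Suc t)) v) / 2 ^ Suc t"
    by (simp add: adj_sum_def sum_divide_distrib)
  finally have "inflow V E (?\<psi> (Suc (Suc t))) v
      = 2 / 4 * (of_int (adj_sum V E (scaled_inflow x (Suc t)) v) / 2 ^ Suc t)
        - of_int (scaled_inflow x t v) / 2 ^ t"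
    using 3 by (simp add: inflow_arc_mult outflow_arc_mult)
  then show ?case by (simp add: field_simps)
qed

lemma scaled_inflow_even_if_transfer:
  assumes "x \<in> V" "y \<in> V" "v \<in> V" "cmod \<gamma> = 1"
    and transfer: "\<forall>a\<in>arcs V E. walkU_pow V E \<tau> (vstate V E x) a = \<gamma> * vstate V E y a"
  shows "even (scaled_inflow x \<tau> v)"
proof -
  have "inflow V E ((arc_mult V E ^^ \<tau>) (vstate V E x)) v = \<gamma> * inflow V E (vstate V E y) v"
    using transfer \<open>v \<in> V\<close> by (simp add: inflow_def walkU_pow_def in_arc_iff sum_distrib_left)
  then have K: "of_int (scaled_inflow x \<tau> v) = 2 ^ \<tau> * \<gamma> * (if v = y then 2 else 0)"
    using assms(1-3) by (simp add: inflow_funpow_vstate inflow_vstate field_simps)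
  show ?thesis
  proof (cases "v = y")
    case True
    then have "cmod (of_int (scaled_inflow x \<tau> v)) = 2 ^ Suc \<tau>"
      using K assms(4) by (simp add: norm_mult norm_power)
    then have "real_of_int \<bar>scaled_inflow x \<tau> v\<bar> = real_of_int (2 ^ Suc \<tau>)"
      by simp
    then have "\<bar>scaled_inflow x \<tau> v\<bar> = 2 ^ Suc \<tau>"
      by (simp only: of_int_eq_iff)
    then have "even \<bar>scaled_inflow x \<tau> v\<bar>" by simp
    then show ?thesis by (simp only: dvd_abs_iff)
  next
    case False
    then show ?thesis using K by simp
  qed
qed

lemma scaled_inflow_mod2:
  "(\<lambda>v. of_int (scaled_inflow x (Suc t) v) :: bit) = (adj_sum V E ^^ Suc t) (\<lambda>u. if u = x then 1 else 0)"
proof (induction t)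
  case 0
  show ?case by (auto simp: adj_sum_def finite_nbhd fun_eq_iff)
next
  case (Suc t)
  have "(of_int (scaled_inflow x (Suc (Suc t)) v) :: bit)
      = (\<Sum>u\<in>nbhd V E v. of_int (scaled_inflow x (Suc t) u)) - of_int 4 * of_int (scaled_inflow x t v)" for v
    by (simp only: scaled_inflow.simps adj_sum_def of_int_diff of_int_mult of_int_sum)
  then have "(\<lambda>v. of_int (scaled_inflow x (Suc (Suc t)) v) :: bit)
      = adj_sum V E (\<lambda>u. of_int (scaled_inflow x (Suc t) u))"
    by (simp add: adj_sum_def fun_eq_iff)
  then show ?case by (simp add: Suc.IH)
qed

lemma vertex_PST_imp_adj_power_vanishes_mod2:
  assumes "vertex_PST V E"
  obtains x \<tau> where "x \<in> V"
    and "\<And>v. v \<in> V \<Longrightarrow> (adj_sum V E ^^ \<tau>) (\<lambda>u. if u = x then 1 else 0) v = (0::bit)"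
proof -
  obtain x y \<tau> \<gamma> where x: "x \<in> V" and y: "y \<in> V" and "\<tau> \<ge> 1" and \<gamma>: "cmod \<gamma> = 1"
    and transfer: "\<forall>a\<in>arcs V E. walkU_pow V E \<tau> (vstate V E x) a = \<gamma> * vstate V E y a"
    using assms unfolding vertex_PST_def by blast
  then obtain t where \<tau>: "\<tau> = Suc t" by (cases \<tau>) auto
  have "(adj_sum V E ^^ \<tau>) (\<lambda>u. if u = x then 1 else 0) v = (0::bit)" if v: "v \<in> V" for v
  proof -
    have "even (scaled_inflow x \<tau> v)"
      using scaled_inflow_even_if_transfer[OF x y v \<gamma> transfer] .
    then have "(of_int (scaled_inflow x \<tau> v) :: bit) = 0" by (auto elim!: evenE)
    then show ?thesis using fun_cong[OF scaled_inflow_mod2[of x t], of v] \<tau> by simp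
  qed
  then show ?thesis using that x by blast
qed

end

(* The adjacency operator of the circulant, acting on n-periodic functions on the integers. *)
definition shift_sum :: "int \<Rightarrow> int \<Rightarrow> (int \<Rightarrow> 'a::comm_monoid_add) \<Rightarrow> int \<Rightarrow> 'a" where
  "shift_sum a b h z = h (z + a) + h (z - a) + h (z + b) + h (z - b)"

lemma shift_sum_twice_eq:
  fixes h :: "int \<Rightarrow> 'a::comm_semiring_1"
  shows "shift_sum a b (shift_sum a b h) z = shift_sum (2 * a) (2 * b) h z
    + 2 * (h z + h z + h (z + a + b) + h (z + a - b) + h (z - a + b) + h (z - a - b))"
  unfolding shift_sum_def mult_2 by (simp add: algebra_simps)

lemma shift_sum_twice_bit:
  fixes h :: "int \<Rightarrow> bit"
  shows "shift_sum a b (shift_sum a b h) = shift_sum (2 * a) (2 * b) h"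
  by (simp add: fun_eq_iff shift_sum_twice_eq)

lemma shift_sum_pow2_bit:
  "(shift_sum a b ^^ 2 ^ j :: (int \<Rightarrow> bit) \<Rightarrow> int \<Rightarrow> bit) = shift_sum (2 ^ j * a) (2 ^ j * b)"
proof (induction j)
  case 0
  show ?case by simp
next
  case (Suc j)
  have "(shift_sum a b ^^ 2 ^ Suc j :: (int \<Rightarrow> bit) \<Rightarrow> int \<Rightarrow> bit)
      = (shift_sum a b ^^ 2 ^ j) \<circ> (shift_sum a b ^^ 2 ^ j)"
    by (simp only: power_Suc mult_2 funpow_add)
  also have "\<dots> = shift_sum (2 ^ j * a) (2 ^ j * b) \<circ> shift_sum (2 ^ j * a) (2 ^ j * b)"
    by (simp only: Suc.IH)
  also have "\<dots> = shift_sum (2 ^ Suc j * a) (2 ^ Suc j * b)"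
    by (simp add: fun_eq_iff shift_sum_twice_bit mult.assoc)
  finally show ?case .
qed

lemma shift_sum_funpow_zero: "(shift_sum a b ^^ m) (\<lambda>_. 0) = (\<lambda>_. 0)"
  by (induction m) (simp_all add: shift_sum_def)

lemma two_pow_totient_cong:
  fixes l :: int
  assumes "odd l" and "l > 1"
  shows "[2 ^ (totient (nat l) * t) = 1] (mod l)"
proof -
  have "[2 ^ totient (nat l) = 1] (mod l)"
    using residues.euler_theorem[of l 2] assms by (simp add: residues_def)
  then have "[(2 ^ totient (nat l)) ^ t = 1 ^ t] (mod l)"
    by (rule cong_pow)
  then show ?thesis by (simp add: power_mult)
qed

lemma shift_sum_pow2_indicator:
  fixes l n x a b :: int
  assumes "[2 ^ j = 1] (mod l)" and "l dvd n"
    and "\<not> l dvd 2 * a" and "\<not> l dvd a + b" and "\<not> l dvd a - b"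
  shows "(shift_sum a b ^^ 2 ^ j) (\<lambda>w. if w mod n = x mod n then 1 else 0 :: bit) (x + 2 ^ j * a) = 1"
proof -
  define N :: int where "N = 2 ^ j"
  define \<delta> :: "int \<Rightarrow> bit" where "\<delta> = (\<lambda>w. if w mod n = x mod n then 1 else 0)"
  have "coprime l N"
    using cong_imp_coprime[of 1 N l] assms(1) by (simp add: N_def cong_sym_eq coprime_commute)
  have off: "\<delta> (x + N * c) = 0" if "\<not> l dvd c" for c
  proof (rule ccontr)
    assume "\<delta> (x + N * c) \<noteq> 0"
    then have "n dvd N * c"
      by (simp add: \<delta>_def mod_eq_dvd_iff split: if_splits)
    then have "l dvd N * c"
      using assms(2) by (rule dvd_trans[rotated])
    then have "l dvd c"
      using coprime_dvd_mult_right_iff[OF \<open>coprime l N\<close>] by simp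
    with that show False ..
  qed
  have "(shift_sum a b ^^ 2 ^ j) \<delta> (x + N * a)
      = \<delta> (x + N * (2 * a)) + \<delta> x + \<delta> (x + N * (a + b)) + \<delta> (x + N * (a - b))"
    by (simp add: shift_sum_pow2_bit shift_sum_def N_def algebra_simps)
  also have "\<dots> = 1"
    using off assms(3-5) by (simp add: \<delta>_def)
  finally show ?thesis unfolding N_def \<delta>_def .
qed

lemma shift_sum_funpow_indicator_nonzero:
  fixes l n x a b :: int
  assumes "odd l" and "l > 1" and "l dvd n"
    and "\<not> l dvd 2 * a" and "\<not> l dvd a + b" and "\<not> l dvd a - b"
  shows "(shift_sum a b ^^ \<tau>) (\<lambda>w. if w mod n = x mod n then 1 else 0 :: bit) \<noteq> (\<lambda>_. 0)"
proof
  let ?\<delta> = "\<lambda>w. if w mod n = x mod n then 1 else 0 :: bit"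
  assume vanish: "(shift_sum a b ^^ \<tau>) ?\<delta> = (\<lambda>_. 0)"
  define j where "j = totient (nat l) * \<tau>"
  have "\<tau> \<le> j"
    using assms(2) by (simp add: j_def Suc_le_eq)
  also have "j < 2 ^ j"
    by (rule less_exp)
  finally have "2 ^ j = (2 ^ j - \<tau>) + \<tau>" by simp
  then have "(shift_sum a b ^^ 2 ^ j) ?\<delta> = (shift_sum a b ^^ (2 ^ j - \<tau>)) ((shift_sum a b ^^ \<tau>) ?\<delta>)"
    by (metis funpow_add comp_apply)
  then have "(shift_sum a b ^^ 2 ^ j) ?\<delta> (x + 2 ^ j * a) = 0"
    by (simp add: vanish shift_sum_funpow_zero)
  moreover have "[2 ^ j = 1] (mod l)"
    unfolding j_def using assms(1,2) by (rule two_pow_totient_cong)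
  then have "(shift_sum a b ^^ 2 ^ j) ?\<delta> (x + 2 ^ j * a) = 1"
    using assms(3-6) by (rule shift_sum_pow2_indicator)
  ultimately show False by simp
qed

lemma circ_E_pm_set_sym:
  assumes "circ_E n (pm_set n a b) x y"
  shows "circ_E n (pm_set n a b) y x"
proof -
  obtain s where s: "s \<in> {a, - a, b, - b}" and "(y - x) mod n = s mod n"
    using assms by (auto simp: circ_E_def pm_set_def)
  then have "(x - y) mod n = (- s) mod n"
    using mod_minus_cong[of "y - x" n s] by simp
  moreover have "- s \<in> {a, - a, b, - b}"
    using s by auto
  ultimately show ?thesis by (auto simp: circ_E_def pm_set_def)
qed

lemma mod_diff_eq_iff_eq_mod:
  fixes u z c n :: int
  assumes "u \<in> {0..<n}"
  shows "(u - z) mod n = c mod n \<longleftrightarrow> u = (z + c) mod n"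
proof -
  have "(u - z) mod n = c mod n \<longleftrightarrow> u mod n = (z + c) mod n"
    by (simp add: mod_eq_dvd_iff algebra_simps)
  also have "\<dots> \<longleftrightarrow> u = (z + c) mod n"
    using assms by simp
  finally show ?thesis .
qed

lemma circ_nbhd:
  fixes n a b z :: int
  assumes "n > 0"
  shows "nbhd (circ_V n) (circ_E n (pm_set n a b)) (z mod n)
    = {(z + a) mod n, (z - a) mod n, (z + b) mod n, (z - b) mod n}"
proof -
  have "circ_E n (pm_set n a b) (z mod n) u \<longleftrightarrow>
      u = (z + a) mod n \<or> u = (z + - a) mod n \<or> u = (z + b) mod n \<or> u = (z + - b) mod n"
    if "u \<in> {0..<n}" for u
    using mod_diff_eq_iff_eq_mod[OF that] by (simp add: circ_E_def pm_set_def mod_diff_right_eq)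
  then show ?thesis
    using assms by (auto simp: nbhd_def circ_V_def)
qed

lemma sum_four:
  assumes "card {p, q, r, s} = 4"
  shows "sum h {p, q, r, s} = h p + h q + h r + h s"
proof -
  have "distinct [p, q, r, s]"
    using assms by (intro card_distinct) simp
  then show ?thesis by (simp add: add.assoc)
qed

lemma circ_regular_card:
  fixes n a b z :: int
  assumes "n > 0" and "gregular (circ_V n) (circ_E n (pm_set n a b)) 4"
  shows "card {(z + a) mod n, (z - a) mod n, (z + b) mod n, (z - b) mod n} = 4"
proof -
  have "z mod n \<in> circ_V n" using assms(1) by (simp add: circ_V_def)
  then have "card (nbhd (circ_V n) (circ_E n (pm_set n a b)) (z mod n)) = 4"
    using assms(2) by (simp add: gregular_def gdeg_def nbhd_def)
  then show ?thesis by (simp only: circ_nbhd[OF assms(1)])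
qed

lemma circ_regular_neq:
  fixes n a b :: int
  assumes "n > 0" and "gregular (circ_V n) (circ_E n (pm_set n a b)) 4"
  shows "a mod n \<noteq> b mod n"
proof
  assume ab: "a mod n = b mod n"
  then have "(- a) mod n = (- b) mod n"
    by (rule mod_minus_cong)
  with ab have "{a mod n, (- a) mod n, b mod n, (- b) mod n} = {a mod n, (- a) mod n}"
    by auto
  then show False
    using circ_regular_card[OF assms, of 0] by (simp add: card_insert_if split: if_splits)
qed

lemma circ_adj_sum_funpow:
  fixes n a b z :: int
  assumes "n > 0" and "gregular (circ_V n) (circ_E n (pm_set n a b)) 4"
  shows "(adj_sum (circ_V n) (circ_E n (pm_set n a b)) ^^ t) h (z mod n)
    = (shift_sum a b ^^ t) (\<lambda>w. h (w mod n)) z"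
proof (induction t arbitrary: z)
  case 0
  show ?case by simp
next
  case (Suc t)
  let ?A = "adj_sum (circ_V n) (circ_E n (pm_set n a b))"
  have "(?A ^^ Suc t) h (z mod n) = ?A ((?A ^^ t) h) (z mod n)"
    by simp
  also have "\<dots> = (?A ^^ t) h ((z + a) mod n) + (?A ^^ t) h ((z - a) mod n)
      + (?A ^^ t) h ((z + b) mod n) + (?A ^^ t) h ((z - b) mod n)"
    unfolding adj_sum_def circ_nbhd[OF assms(1)] by (rule sum_four[OF circ_regular_card[OF assms]])
  also have "\<dots> = (shift_sum a b ^^ Suc t) (\<lambda>w. h (w mod n)) z"
    by (simp add: Suc.IH shift_sum_def[of a b "(shift_sum a b ^^ t) (\<lambda>w. h (w mod n))"])
  finally show ?case .
qed

lemma not_dvd_between: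
  fixes l c :: int
  assumes "0 < c" and "c < 2 * l" and "c \<noteq> l"
  shows "\<not> l dvd c"
proof
  assume "l dvd c"
  then obtain m where c: "c = l * m" ..
  have "l > 0" using assms by linarith
  have "0 < l * m" and "l * m < l * 2"
    using assms(1,2) c by linarith+
  then have "0 < m" and "m < 2"
    using \<open>l > 0\<close> by (simp_all add: zero_less_mult_iff)
  then show False using assms(3) c by simp
qed

lemma circ_adj_power_indicator_nonzero_mod2:
  fixes l a b x :: int
  assumes "odd l" and "l \<ge> 2" and "a \<in> {1..l-1}" and "b \<in> {1..l-1}" and "a + b \<noteq> l"
    and reg: "gregular (circ_V (2*l)) (circ_E (2*l) (pm_set (2*l) a b)) 4"
    and x: "x \<in> circ_V (2*l)"
  shows "\<exists>v\<in>circ_V (2*l).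
    (adj_sum (circ_V (2*l)) (circ_E (2*l) (pm_set (2*l) a b)) ^^ \<tau>) (\<lambda>u. if u = x then 1 else 0) v \<noteq> (0::bit)"
proof -
  define n where "n = 2 * l"
  have "n > 0" using assms(2) by (simp add: n_def)
  have "x mod n = x" using x by (simp add: n_def circ_V_def)
  have "a \<noteq> b"
    using circ_regular_neq[OF \<open>n > 0\<close> reg[folded n_def]] by auto
  have "2 * a \<noteq> l"
    using assms(1) by auto
  then have "\<not> l dvd 2 * a"
    using not_dvd_between[of "2 * a" l] assms(3) by auto
  moreover have "\<not> l dvd a + b"
    using not_dvd_between[of "a + b" l] assms(3-5) by auto
  moreover have "\<bar>a - b\<bar> < l"
    using assms(3,4) by (simp add: abs_less_iff)
  then have "\<not> l dvd a - b"
    using not_dvd_between[of "\<bar>a - b\<bar>" l] \<open>a \<noteq> b\<close> by simp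
  ultimately have "(shift_sum a b ^^ \<tau>) (\<lambda>w. if w mod n = x mod n then 1 else 0 :: bit) \<noteq> (\<lambda>_. 0)"
    using shift_sum_funpow_indicator_nonzero[of l n a b \<tau> x] assms(1,2) by (simp add: n_def)
  then obtain z where
    "(shift_sum a b ^^ \<tau>) (\<lambda>w. if w mod n = x mod n then 1 else 0 :: bit) z \<noteq> 0"
    by (blast intro: ext)
  moreover have "z mod n \<in> circ_V (2*l)"
    using \<open>n > 0\<close> by (simp add: n_def circ_V_def)
  ultimately show ?thesis
    using circ_adj_sum_funpow[OF \<open>n > 0\<close> reg[folded n_def], of \<tau> "\<lambda>u. if u = x then 1 else 0 :: bit" z]
      \<open>x mod n = x\<close> by (auto simp: n_def)
qed

theorem theorem9p17:
  fixes l a b :: int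
  assumes "l \<ge> 2" and "odd l"
    and "a \<in> {1..l-1}" and "b \<in> {1..l-1}"
    and "gconnected (circ_V (2*l)) (circ_E (2*l) (pm_set (2*l) a b))"
    and "gregular (circ_V (2*l)) (circ_E (2*l) (pm_set (2*l) a b)) 4"
    and "a + b \<noteq> l"
  shows "\<not> vertex_PST (circ_V (2*l)) (circ_E (2*l) (pm_set (2*l) a b))"
proof
  let ?V = "circ_V (2*l)" and ?E = "circ_E (2*l) (pm_set (2*l) a b)"
  assume "vertex_PST ?V ?E"
  interpret four_regular_graph ?V ?E
    using assms(6) by unfold_locales (auto simp: circ_V_def gregular_def intro: circ_E_pm_set_sym)
  obtain x \<tau> where "x \<in> ?V"
    and "\<And>v. v \<in> ?V \<Longrightarrow> (adj_sum ?V ?E ^^ \<tau>) (\<lambda>u. if u = x then 1 else 0) v = (0::bit)"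
    using vertex_PST_imp_adj_power_vanishes_mod2[OF \<open>vertex_PST ?V ?E\<close>] by blast
  then show False
    using circ_adj_power_indicator_nonzero_mod2[OF assms(2,1,3,4,7,6)] by blast
qed

end
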